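(* For $\xi_1,\xi_2\in\mathbb R$ let $W=\mathrm{diag}\{\xi_1,\dots,\xi_1,0,-\xi_2\}\in\mathbb R^{(d+2)\times(d+2)}$ ($\xi_1$ repeated $d$ times). Then the loss $L(W)$ equals, up to the constant factor $\tfrac12$, $$\mathcal L(\xi_1,\xi_2):=\mathbb E\bigg[\bigg(\frac{\sum_{j=1}^N\exp(\xi_1\langle x_j,x_{N+1}\rangle)y_j}{\sum_{i=1}^N\exp(\xi_1\langle x_i,x_{N+1}\rangle)+\exp(\xi_1-\xi_2)}-y_{i^*}\bigg)^2\bigg],$$ and $\mathcal L$ is not a convex function of $(\xi_1,\xi_2)$.
   Context: Setting: $d,N\ge1$; prompt $x_1,\dots,x_N\in\mathbb R^d$, labels $y_1,\dots,y_N\in\mathbb R$, query $x_{N+1}$. Embedding $h_j=(x_j^\top,y_j,0)^\top$ ($j\le N$), $h_{N+1}=(x_{N+1}^\top,0,1)^\top$. For $W\in\mathbb R^{(d+2)\times(d+2)}$, $\hat y_W(x_{N+1})=\sum_{j=1}^N y_j\exp(h_j^\top Wh_{N+1})/\sum_{j=1}^{N+1}\exp(h_j^\top Wh_{N+1})$. $i^*=\arg\min_{j\in[N]}\|x_{N+1}-x_j\|_2$. Training distribution: $x_1,\dots,x_{N+1}$ i.i.d. uniform on $\mathbb S^{d-1}$; $\mathbb E[y_iy_j\mid x_{1:N}]=0$ ($i\ne j$), $\mathbb E[y_i^2\mid x_{1:N}]=1$, $\mathbb P(y_{1:N}\mid x_{1:N})=\mathbb P(y_{1:N}\mid -x_{1:N})$.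 Loss $L(W)=\frac12\mathbb E[(\hat y_W(x_{N+1})-y_{i^*})^2]$. *)

theory Defs
  imports "HOL-Probability.Probability" "HOL-Library.Numeral_Type"
begin

text \<open>Uniform probability measure on the unit sphere of real^'d: the normalized
  cone measure, i.e. the image of the uniform distribution on the unit ball under
  radial projection x \<mapsto> x / |x|.\<close>
definition sphere_unif :: "(real^'d) measure" where
  "sphere_unif = distr (uniform_measure lborel (ball 0 1)) borel (\<lambda>x. x /\<^sub>R norm x)"

text \<open>Coordinates of R^(d+2): Inl k (k::'d) are the first d coordinates,
  Inr 0 is coordinate d+1, Inr 1 is coordinate d+2.\<close>
definition emb_x :: "real^'d \<Rightarrow> real \<Rightarrow> real^('d + 2)" where
  "emb_x x y = (\<chi> i. case i of Inl k \<Rightarrow> x $ k | Inr t \<Rightarrow> (if t = 0 then y else 0))"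

definition emb_q :: "real^'d \<Rightarrow> real^('d + 2)" where
  "emb_q x = (\<chi> i. case i of Inl k \<Rightarrow> x $ k | Inr t \<Rightarrow> (if t = 0 then 0 else 1))"

text \<open>Prompt indices 1..N, query index N+1.\<close>
definition tf_pred :: "real^('d + 2)^('d + 2) \<Rightarrow> nat \<Rightarrow> (nat \<Rightarrow> real^'d) \<Rightarrow> (nat \<Rightarrow> real) \<Rightarrow> real" where
  "tf_pred W N x y =
     (\<Sum>j=1..N. y j * exp (emb_x (x j) (y j) \<bullet> (W *v emb_q (x (N+1)))))
     / ((\<Sum>j=1..N. exp (emb_x (x j) (y j) \<bullet> (W *v emb_q (x (N+1)))))
        + exp (emb_q (x (N+1)) \<bullet> (W *v emb_q (x (N+1)))))"

definition nearest :: "nat \<Rightarrow> (nat \<Rightarrow> real^'d) \<Rightarrow> nat" where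
  "nearest N x = (ARG_MIN (\<lambda>j. dist (x (N+1)) (x j)) j. j \<in> {1..N})"

definition icl_loss :: "'a measure \<Rightarrow> nat \<Rightarrow> (nat \<Rightarrow> 'a \<Rightarrow> real^'d) \<Rightarrow> (nat \<Rightarrow> 'a \<Rightarrow> real)
    \<Rightarrow> real^('d + 2)^('d + 2) \<Rightarrow> real" where
  "icl_loss M N X Y W = 1/2 * (\<integral>\<omega>. (tf_pred W N (\<lambda>j. X j \<omega>) (\<lambda>j. Y j \<omega>)
        - Y (nearest N (\<lambda>j. X j \<omega>)) \<omega>)\<^sup>2 \<partial>M)"

definition diagW :: "real \<Rightarrow> real \<Rightarrow> real^('d::finite + 2)^('d + 2)" where
  "diagW \<xi>1 \<xi>2 = (\<chi> i j. if i = j then (case i of Inl _ \<Rightarrow> \<xi>1 | Inr t \<Rightarrow> (if t = 0 then 0 else - \<xi>2)) else 0)"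

definition Lcal :: "'a measure \<Rightarrow> nat \<Rightarrow> (nat \<Rightarrow> 'a \<Rightarrow> real^'d) \<Rightarrow> (nat \<Rightarrow> 'a \<Rightarrow> real)
    \<Rightarrow> real \<Rightarrow> real \<Rightarrow> real" where
  "Lcal M N X Y \<xi>1 \<xi>2 = (\<integral>\<omega>.
      ((\<Sum>j=1..N. exp (\<xi>1 * (X j \<omega> \<bullet> X (N+1) \<omega>)) * Y j \<omega>)
        / ((\<Sum>i=1..N. exp (\<xi>1 * (X i \<omega> \<bullet> X (N+1) \<omega>))) + exp (\<xi>1 - \<xi>2))
       - Y (nearest N (\<lambda>j. X j \<omega>)) \<omega>)\<^sup>2 \<partial>M)"

definition prompt_alg :: "'a measure \<Rightarrow> nat \<Rightarrow> (nat \<Rightarrow> 'a \<Rightarrow> real^'d) \<Rightarrow> 'a measure" where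
  "prompt_alg M N X = vimage_algebra (space M) (\<lambda>\<omega>. \<lambda>i\<in>{1..N}. X i \<omega>) (PiM {1..N} (\<lambda>_. borel))"

end

theory Submission
  imports Defs
begin

text \<open>
  For the diagonal W the score of the query against itself is \<open>\<xi>1 \<parallel>x\<^sub>N\<^sub>+\<^sub>1\<parallel>\<^sup>2 - \<xi>2\<close>,
  which equals \<open>\<xi>1 - \<xi>2\<close> almost surely because the query lies on the unit sphere; this gives
  the identity between the two losses.

  On the line \<open>\<xi>1 = 0\<close> all attention weights are 1, so with \<open>a = 1 / (N + exp (-\<xi>2))\<close> and
  \<open>S = \<Sum>j. y\<^sub>j\<close> the loss is \<open>E[(a S - y\<^sub>i\<^sub>*)\<^sup>2] = N a\<^sup>2 - 2 B a + C\<close> with constants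
  \<open>B, C\<close>, since the conditional moment hypotheses give \<open>E[y\<^sub>i y\<^sub>j] = \<delta>\<^sub>i\<^sub>j\<close>. As a function
  of \<open>\<xi>2\<close> this is bounded and, as \<open>a\<close> is injective and a nonconstant quadratic takes each value
  at most twice, not constant. But a convex function on the real line that is bounded above is
  constant.
\<close>

lemma sum_UNIV_plus_2:
  fixes f :: "('d::finite + 2) \<Rightarrow> 'b::comm_monoid_add"
  shows "sum f UNIV = (\<Sum>k\<in>UNIV. f (Inl k)) + f (Inr 0) + f (Inr 1)"
proof -
  have "sum f UNIV = (\<Sum>k\<in>UNIV. f (Inl k)) + (\<Sum>t\<in>UNIV. f (Inr t))"
    by (subst UNIV_Plus_UNIV[symmetric], subst sum.Plus) auto
  moreover have "(\<Sum>t\<in>UNIV. f (Inr t)) = f (Inr 0) + f (Inr 1)"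
  proof -
    have two: "(UNIV :: 2 set) = {0, 1}" using UNIV_2 by auto
    show ?thesis unfolding two by simp
  qed
  ultimately show ?thesis by (simp add: add.assoc)
qed

lemma diagW_mult_emb_q:
  "diagW \<xi>1 \<xi>2 *v emb_q z = (\<chi> i. case i of Inl k \<Rightarrow> \<xi>1 * z $ k | Inr t \<Rightarrow> (if t = 0 then 0 else - \<xi>2))"
  unfolding matrix_vector_mult_def diagW_def emb_q_def
  by (simp add: vec_eq_iff if_distrib if_distribR sum.delta cong: if_cong split: sum.splits)

lemma inner_emb_x_diagW_emb_q: "emb_x x y \<bullet> (diagW \<xi>1 \<xi>2 *v emb_q z) = \<xi>1 * (x \<bullet> z)"
  by (simp add: inner_vec_def sum_UNIV_plus_2 diagW_mult_emb_q emb_x_def sum_distrib_left mult_ac)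

lemma inner_emb_q_diagW_emb_q: "emb_q z \<bullet> (diagW \<xi>1 \<xi>2 *v emb_q z) = \<xi>1 * (z \<bullet> z) - \<xi>2"
  unfolding inner_vec_def sum_UNIV_plus_2 diagW_mult_emb_q
  by (simp add: emb_q_def sum_distrib_left mult_ac)

lemma tf_pred_diagW:
  "tf_pred (diagW \<xi>1 \<xi>2) N x y =
     (\<Sum>j=1..N. exp (\<xi>1 * (x j \<bullet> x (N+1))) * y j)
     / ((\<Sum>i=1..N. exp (\<xi>1 * (x i \<bullet> x (N+1)))) + exp (\<xi>1 * (x (N+1) \<bullet> x (N+1)) - \<xi>2))"
  by (simp add: tf_pred_def inner_emb_x_diagW_emb_q inner_emb_q_diagW_emb_q mult.commute)

lemma AE_sphere_unif_norm: "AE x in sphere_unif. norm x = 1"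
  unfolding sphere_unif_def
proof (subst AE_distr_iff)
  show "(\<lambda>x::real^'d. x /\<^sub>R norm x) \<in> measurable (uniform_measure lborel (ball 0 1)) borel"
    by (simp add: measurable_cong_sets[OF sets_uniform_measure refl])
  show "{x \<in> space borel. norm (x::real^'d) = 1} \<in> sets borel" by measurable
  show "AE x in uniform_measure lborel (ball (0::real^'d) 1). norm (x /\<^sub>R norm x) = 1"
    by (rule AE_uniform_measureI) (auto intro: eventually_mono[OF AE_lborel_singleton[of 0]])
qed

lemma measurable_arg_min_finite:
  fixes f :: "'i::countable \<Rightarrow> 'a \<Rightarrow> real"
  assumes I: "finite I" "I \<noteq> {}" and f: "\<And>i. i \<in> I \<Longrightarrow> f i \<in> borel_measurable M"
  shows "(\<lambda>\<omega>. ARG_MIN (\<lambda>i. f i \<omega>) i. i \<in> I) \<in> measurable M (count_space I)"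
proof -
  txt \<open>\<open>ARG_MIN\<close> is a fixed choice function applied to the set of minimisers, which ranges over
    the finitely many subsets of \<open>I\<close>; so it suffices that each event \<open>T = U\<close> is measurable.\<close>
  define T where "T \<omega> = {i \<in> I. \<forall>j\<in>I. f i \<omega> \<le> f j \<omega>}" for \<omega>
  have arg_min_eq: "(ARG_MIN (\<lambda>i. f i \<omega>) i. i \<in> I) = (SOME i. i \<in> T \<omega>)" for \<omega>
    unfolding T_def arg_min_def is_arg_min_def
    by (rule arg_cong[where f = Eps]) (auto simp: fun_eq_iff not_less)
  have T_eq: "{\<omega> \<in> space M. T \<omega> = U} \<in> sets M" if "U \<subseteq> I" for U
  proof -
    have "{\<omega> \<in> space M. T \<omega> = U} = {\<omega> \<in> space M. \<forall>i\<in>I. i \<in> U \<longleftrightarrow> (\<forall>j\<in>I. f i \<omega> \<le> f j \<omega>)}"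
      using that by (auto simp: T_def)
    also have "\<dots> \<in> sets M"
      using I f by (intro sets.sets_Collect_finite_All sets.sets_Collect_conj sets.sets_Collect_imp
          sets.sets_Collect_const borel_measurable_le) auto
    finally show ?thesis .
  qed
  show ?thesis
  proof (subst measurable_count_space_eq2[OF I(1)], intro conjI ballI)
    show "(\<lambda>\<omega>. ARG_MIN (\<lambda>i. f i \<omega>) i. i \<in> I) \<in> space M \<rightarrow> I"
      using I arg_min_if_finite(1) by (fastforce simp: arg_min_on_def)
    fix a
    have "(\<lambda>\<omega>. ARG_MIN (\<lambda>i. f i \<omega>) i. i \<in> I) -` {a} \<inter> space M
        = (\<Union>U\<in>{U \<in> Pow I. (SOME i. i \<in> U) = a}. {\<omega> \<in> space M. T \<omega> = U})"
      by (auto simp: arg_min_eq T_def)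
    also have "\<dots> \<in> sets M"
      using I T_eq by (intro sets.finite_UN) auto
    finally show "(\<lambda>\<omega>. ARG_MIN (\<lambda>i. f i \<omega>) i. i \<in> I) -` {a} \<inter> space M \<in> sets M" .
  qed
qed

lemma nearest_in_range: "N \<ge> 1 \<Longrightarrow> nearest N x \<in> {1..N}"
  unfolding nearest_def using arg_min_if_finite(1)[of "{1..N}"] by (simp add: arg_min_on_def)

lemma measurable_nearest:
  assumes "N \<ge> 1" and X: "\<And>i. i \<in> {1..N+1} \<Longrightarrow> X i \<in> borel_measurable M"
  shows "(\<lambda>\<omega>. nearest N (\<lambda>j. X j \<omega>)) \<in> measurable M (count_space {1..N})"
  unfolding nearest_def
proof (rule measurable_arg_min_finite)
  fix j assume "j \<in> {1..N}"
  then have [measurable]: "X j \<in> borel_measurable M" "X (N+1) \<in> borel_measurable M" using X by auto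
  show "(\<lambda>\<omega>. dist (X (N+1) \<omega>) (X j \<omega>)) \<in> borel_measurable M" by measurable
qed (use \<open>N \<ge> 1\<close> in auto)

lemma borel_measurable_at_nearest:
  fixes Y :: "nat \<Rightarrow> 'a \<Rightarrow> real"
  assumes "N \<ge> 1" and "\<And>i. i \<in> {1..N+1} \<Longrightarrow> X i \<in> borel_measurable M"
    and "\<And>i. i \<in> {1..N} \<Longrightarrow> Y i \<in> borel_measurable M"
  shows "(\<lambda>\<omega>. Y (nearest N (\<lambda>j. X j \<omega>)) \<omega>) \<in> borel_measurable M"
  by (rule measurable_compose_countable'[OF _ measurable_nearest[OF assms(1,2)]]) (use assms(3) in auto)

lemma icl_loss_diagW:
  fixes X :: "nat \<Rightarrow> 'a \<Rightarrow> real^'d" and Y :: "nat \<Rightarrow> 'a \<Rightarrow> real"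
  assumes N: "N \<ge> 1" and X: "\<And>i. i \<in> {1..N+1} \<Longrightarrow> X i \<in> borel_measurable M"
    and Y: "\<And>i. i \<in> {1..N} \<Longrightarrow> Y i \<in> borel_measurable M"
    and unit: "AE \<omega> in M. norm (X (N+1) \<omega>) = 1"
  shows "icl_loss M N X Y (diagW \<xi>1 \<xi>2) = 1/2 * Lcal M N X Y \<xi>1 \<xi>2"
proof -
  define G where "G \<omega> r = ((\<Sum>j=1..N. exp (\<xi>1 * (X j \<omega> \<bullet> X (N+1) \<omega>)) * Y j \<omega>)
        / ((\<Sum>i=1..N. exp (\<xi>1 * (X i \<omega> \<bullet> X (N+1) \<omega>))) + exp (\<xi>1 * r - \<xi>2))
       - Y (nearest N (\<lambda>j. X j \<omega>)) \<omega>)\<^sup>2" for \<omega> r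
  have [measurable]: "X (N+1) \<in> borel_measurable M" using X by auto
  have [measurable]: "(\<lambda>\<omega>. Y (nearest N (\<lambda>j. X j \<omega>)) \<omega>) \<in> borel_measurable M"
    by (rule borel_measurable_at_nearest[OF N X Y])
  have [measurable]: "X j \<in> borel_measurable M" "Y j \<in> borel_measurable M"
    if "j \<in> {1..N}" for j using that X Y by auto
  have [measurable]: "(\<lambda>\<omega>. \<Sum>j=1..N. exp (\<xi>1 * (X j \<omega> \<bullet> X (N+1) \<omega>)) * Y j \<omega>) \<in> borel_measurable M"
    "(\<lambda>\<omega>. \<Sum>j=1..N. exp (\<xi>1 * (X j \<omega> \<bullet> X (N+1) \<omega>))) \<in> borel_measurable M"
    by (intro borel_measurable_sum, measurable)+
  have G_measurable: "(\<lambda>\<omega>. G \<omega> (R \<omega>)) \<in> borel_measurable M" if [measurable]: "R \<in> borel_measurable M" for R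
    unfolding G_def by measurable
  have "(\<integral>\<omega>. (tf_pred (diagW \<xi>1 \<xi>2) N (\<lambda>j. X j \<omega>) (\<lambda>j. Y j \<omega>) - Y (nearest N (\<lambda>j. X j \<omega>)) \<omega>)\<^sup>2 \<partial>M)
      = (\<integral>\<omega>. G \<omega> (X (N+1) \<omega> \<bullet> X (N+1) \<omega>) \<partial>M)"
    unfolding tf_pred_diagW G_def by (simp only: mult.commute)
  also have "\<dots> = (\<integral>\<omega>. G \<omega> 1 \<partial>M)"
  proof (rule integral_cong_AE)
    show "(\<lambda>\<omega>. G \<omega> (X (N+1) \<omega> \<bullet> X (N+1) \<omega>)) \<in> borel_measurable M" by (rule G_measurable) measurable
    show "(\<lambda>\<omega>. G \<omega> 1) \<in> borel_measurable M" by (rule G_measurable) simp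
    show "AE \<omega> in M. G \<omega> (X (N+1) \<omega> \<bullet> X (N+1) \<omega>) = G \<omega> 1"
      using unit by eventually_elim (simp add: dot_square_norm)
  qed
  finally show ?thesis by (simp add: icl_loss_def Lcal_def G_def)
qed

lemma integrable_mult_of_square_integrable:
  fixes f g :: "'a \<Rightarrow> real"
  assumes [measurable]: "f \<in> borel_measurable M" "g \<in> borel_measurable M"
    and "integrable M (\<lambda>x. (f x)\<^sup>2)" "integrable M (\<lambda>x. (g x)\<^sup>2)"
  shows "integrable M (\<lambda>x. f x * g x)"
proof (rule Bochner_Integration.integrable_bound)
  show "integrable M (\<lambda>x. (f x)\<^sup>2 + (g x)\<^sup>2)" using assms by simp
  have "\<bar>f x * g x\<bar> \<le> (f x)\<^sup>2 + (g x)\<^sup>2" for x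
  proof -
    have "2 * \<bar>f x\<bar> * \<bar>g x\<bar> \<le> (f x)\<^sup>2 + (g x)\<^sup>2"
      using sum_squares_bound[of "\<bar>f x\<bar>" "\<bar>g x\<bar>"] by simp
    moreover have "0 \<le> \<bar>f x\<bar> * \<bar>g x\<bar>" by simp
    ultimately show ?thesis unfolding abs_mult by linarith
  qed
  then show "AE x in M. norm (f x * g x) \<le> norm ((f x)\<^sup>2 + (g x)\<^sup>2)" by simp
qed measurable

lemma integrable_square_sum:
  fixes Y :: "'i \<Rightarrow> 'a \<Rightarrow> real"
  assumes "\<And>i. i \<in> I \<Longrightarrow> Y i \<in> borel_measurable M" "\<And>i. i \<in> I \<Longrightarrow> integrable M (\<lambda>\<omega>. (Y i \<omega>)\<^sup>2)"
  shows "integrable M (\<lambda>\<omega>. (\<Sum>i\<in>I. Y i \<omega>)\<^sup>2)"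
  unfolding power2_eq_square sum_product
  using assms by (intro Bochner_Integration.integrable_sum integrable_mult_of_square_integrable) auto

lemma integral_square_sum_orthonormal:
  fixes Y :: "'i \<Rightarrow> 'a \<Rightarrow> real"
  assumes "finite I"
    and Y: "\<And>i. i \<in> I \<Longrightarrow> Y i \<in> borel_measurable M"
    and Y2: "\<And>i. i \<in> I \<Longrightarrow> integrable M (\<lambda>\<omega>. (Y i \<omega>)\<^sup>2)"
    and orthonormal: "\<And>i j. i \<in> I \<Longrightarrow> j \<in> I \<Longrightarrow> (\<integral>\<omega>. Y i \<omega> * Y j \<omega> \<partial>M) = (if i = j then 1 else 0)"
  shows "(\<integral>\<omega>. (\<Sum>i\<in>I. Y i \<omega>)\<^sup>2 \<partial>M) = card I"
proof -
  have "(\<integral>\<omega>. (\<Sum>i\<in>I. Y i \<omega>)\<^sup>2 \<partial>M) = (\<integral>\<omega>. (\<Sum>i\<in>I. \<Sum>j\<in>I. Y i \<omega> * Y j \<omega>) \<partial>M)"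
    by (simp add: power2_eq_square sum_product)
  also have "\<dots> = (\<Sum>i\<in>I. \<Sum>j\<in>I. \<integral>\<omega>. Y i \<omega> * Y j \<omega> \<partial>M)"
    using Y Y2 by (simp add: Bochner_Integration.integral_sum Bochner_Integration.integrable_sum
        integrable_mult_of_square_integrable)
  also have "\<dots> = (\<Sum>i\<in>I. \<Sum>j\<in>I. if i = j then 1 else 0)"
    by (intro sum.cong refl orthonormal)
  finally show ?thesis using \<open>finite I\<close> by simp
qed

lemma integrable_square_at_index:
  fixes Y :: "'i \<Rightarrow> 'a \<Rightarrow> real"
  assumes "finite I" and K: "\<And>\<omega>. K \<omega> \<in> I" and "(\<lambda>\<omega>. Y (K \<omega>) \<omega>) \<in> borel_measurable M"
    and Y2: "\<And>i. i \<in> I \<Longrightarrow> integrable M (\<lambda>\<omega>. (Y i \<omega>)\<^sup>2)"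
  shows "integrable M (\<lambda>\<omega>. (Y (K \<omega>) \<omega>)\<^sup>2)"
proof (rule Bochner_Integration.integrable_bound)
  show "integrable M (\<lambda>\<omega>. \<Sum>i\<in>I. (Y i \<omega>)\<^sup>2)" using Y2 by simp
  have "(Y (K \<omega>) \<omega>)\<^sup>2 \<le> (\<Sum>i\<in>I. (Y i \<omega>)\<^sup>2)" for \<omega>
    using \<open>finite I\<close> K by (intro member_le_sum) auto
  then show "AE \<omega> in M. norm ((Y (K \<omega>) \<omega>)\<^sup>2) \<le> norm (\<Sum>i\<in>I. (Y i \<omega>)\<^sup>2)"
    by (simp add: sum_nonneg)
qed (use assms in measurable)

lemma (in prob_space) integral_eq_of_AE_real_cond_exp_eq:
  assumes "subalgebra M F" "integrable M f" "AE x in M. real_cond_exp M F f x = c"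
  shows "(\<integral>x. f x \<partial>M) = c"
proof -
  interpret sigma_finite_subalgebra M F
    by (rule finite_measure_subalgebra_is_sigma_finite) (unfold_locales, rule assms(1))
  have "(\<integral>x. f x \<partial>M) = (\<integral>x. real_cond_exp M F f x \<partial>M)"
    using real_cond_exp_int(2)[OF assms(2)] by simp
  also have "\<dots> = (\<integral>x. c \<partial>M)"
    using assms(3) by (intro integral_cong_AE) auto
  finally show ?thesis by (simp add: prob_space)
qed

lemma subalgebra_prompt_alg:
  assumes "\<And>i. i \<in> {1..N} \<Longrightarrow> X i \<in> borel_measurable M"
  shows "subalgebra M (prompt_alg M N X)"
proof -
  have X_restrict: "(\<lambda>\<omega>. \<lambda>i\<in>{1..N}. X i \<omega>) \<in> measurable M (PiM {1..N} (\<lambda>_. borel))"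
    using assms by (intro measurable_restrict) auto
  show ?thesis
    unfolding subalgebra_def prompt_alg_def
    using measurable_space[OF X_restrict] measurable_sets[OF X_restrict]
    by (auto simp: sets_vimage_algebra2)
qed

lemma integral_label_products:
  fixes X :: "nat \<Rightarrow> 'a \<Rightarrow> real^'d" and Y :: "nat \<Rightarrow> 'a \<Rightarrow> real"
  assumes "prob_space M"
    and X: "\<And>i. i \<in> {1..N} \<Longrightarrow> X i \<in> borel_measurable M"
    and Y: "\<And>i. i \<in> {1..N} \<Longrightarrow> Y i \<in> borel_measurable M"
    and Y2: "\<And>i. i \<in> {1..N} \<Longrightarrow> integrable M (\<lambda>\<omega>. (Y i \<omega>)\<^sup>2)"
    and uncorrelated: "\<And>i j. i \<in> {1..N} \<Longrightarrow> j \<in> {1..N} \<Longrightarrow> i \<noteq> j \<Longrightarrow>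
           AE \<omega> in M. real_cond_exp M (prompt_alg M N X) (\<lambda>\<omega>. Y i \<omega> * Y j \<omega>) \<omega> = 0"
    and normalized: "\<And>i. i \<in> {1..N} \<Longrightarrow>
           AE \<omega> in M. real_cond_exp M (prompt_alg M N X) (\<lambda>\<omega>. (Y i \<omega>)\<^sup>2) \<omega> = 1"
    and ij: "i \<in> {1..N}" "j \<in> {1..N}"
  shows "(\<integral>\<omega>. Y i \<omega> * Y j \<omega> \<partial>M) = (if i = j then 1 else 0)"
proof (rule prob_space.integral_eq_of_AE_real_cond_exp_eq[OF assms(1) subalgebra_prompt_alg[OF X]])
  show "integrable M (\<lambda>\<omega>. Y i \<omega> * Y j \<omega>)"
    using ij by (intro integrable_mult_of_square_integrable Y Y2)
  show "AE \<omega> in M. real_cond_exp M (prompt_alg M N X) (\<lambda>\<omega>. Y i \<omega> * Y j \<omega>) \<omega> = (if i = j then 1 else 0)"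
    using uncorrelated[OF ij] normalized[OF ij(1)] by (cases "i = j") (simp_all add: power2_eq_square)
qed

lemma Lcal_zero_quadratic:
  fixes X :: "nat \<Rightarrow> 'a \<Rightarrow> real^'d" and Y :: "nat \<Rightarrow> 'a \<Rightarrow> real"
  assumes N: "N \<ge> 1" and X: "\<And>i. i \<in> {1..N+1} \<Longrightarrow> X i \<in> borel_measurable M"
    and Y: "\<And>i. i \<in> {1..N} \<Longrightarrow> Y i \<in> borel_measurable M"
    and Y2: "\<And>i. i \<in> {1..N} \<Longrightarrow> integrable M (\<lambda>\<omega>. (Y i \<omega>)\<^sup>2)"
    and orthonormal: "\<And>i j. i \<in> {1..N} \<Longrightarrow> j \<in> {1..N} \<Longrightarrow>
           (\<integral>\<omega>. Y i \<omega> * Y j \<omega> \<partial>M) = (if i = j then 1 else 0)"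
  shows "\<exists>B C. (\<lambda>t. Lcal M N X Y 0 t)
    = (\<lambda>t. real N * (1 / (real N + exp (- t)))\<^sup>2 - 2 * B * (1 / (real N + exp (- t))) + C)"
proof -
  define S where "S \<omega> = (\<Sum>j=1..N. Y j \<omega>)" for \<omega>
  define Y_near where "Y_near \<omega> = Y (nearest N (\<lambda>j. X j \<omega>)) \<omega>" for \<omega>
  have [measurable]: "Y_near \<in> borel_measurable M"
    unfolding Y_near_def by (rule borel_measurable_at_nearest[OF N X Y])
  have S_sq: "integrable M (\<lambda>\<omega>. (S \<omega>)\<^sup>2)" "(\<integral>\<omega>. (S \<omega>)\<^sup>2 \<partial>M) = real N"
    unfolding S_def
    using integrable_square_sum[of "{1..N}", OF Y Y2]
      integral_square_sum_orthonormal[of "{1..N}", OF _ Y Y2 orthonormal] by auto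
  have Y_near_sq: "integrable M (\<lambda>\<omega>. (Y_near \<omega>)\<^sup>2)"
    unfolding Y_near_def
    by (rule integrable_square_at_index[OF _ nearest_in_range[OF N] borel_measurable_at_nearest[OF N X Y] Y2])
      auto
  have "integrable M (\<lambda>\<omega>. S \<omega> * Y_near \<omega>)"
    unfolding S_def sum_distrib_right using Y Y2 Y_near_sq
    by (intro Bochner_Integration.integrable_sum integrable_mult_of_square_integrable) auto
  moreover have "Lcal M N X Y 0 t = (\<integral>\<omega>. (1 / (real N + exp (- t)))\<^sup>2 * (S \<omega>)\<^sup>2
      - 2 * (1 / (real N + exp (- t))) * (S \<omega> * Y_near \<omega>) + (Y_near \<omega>)\<^sup>2 \<partial>M)" for t
    unfolding Lcal_def S_def Y_near_def
    by (simp add: power2_eq_square algebra_simps add_divide_distrib)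
  ultimately show ?thesis
    using S_sq Y_near_sq by (intro exI[of _ "\<integral>\<omega>. S \<omega> * Y_near \<omega> \<partial>M"] exI[of _ "\<integral>\<omega>. (Y_near \<omega>)\<^sup>2 \<partial>M"]) auto
qed

lemma convex_on_real_bounded_above_const:
  fixes f :: "real \<Rightarrow> real"
  assumes f: "convex_on UNIV f" and bound: "\<And>t. f t \<le> K"
  shows "f x = f y"
proof -
  have "\<not> f a < f b" if "a < b" for a b
  proof
    assume less: "f a < f b"
    define s where "s = (f a - f b) / (a - b)"
    have s: "s > 0" using that less by (simp add: s_def divide_neg_neg)
    define t where "t = b + (K - f b) / s + 1"
    have "t > b" using s bound[of b] by (simp add: t_def add_nonneg_pos)
    then have "s \<le> (f b - f t) / (b - t)"
      using convex_on_slope_le[OF f _ _ that \<open>t > b\<close>] unfolding s_def by auto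
    then have "f b + s * (t - b) \<le> f t"
      using \<open>t > b\<close> by (simp add: le_divide_eq algebra_simps)
    moreover have "f b + s * (t - b) = K + s"
      using s by (simp add: t_def field_simps)
    ultimately show False using s bound[of t] by simp
  qed
  moreover have "\<not> f b < f a" if "a < b" for a b
  proof
    assume less: "f b < f a"
    define s where "s = (f a - f b) / (a - b)"
    have s: "s < 0" using that less by (simp add: s_def divide_pos_neg)
    define t where "t = a + (K - f a) / s - 1"
    have "t < a" using s bound[of a] by (simp add: t_def divide_nonneg_neg)
    then have "(f t - f a) / (t - a) \<le> s"
      using convex_on_slope_le[OF f _ _ \<open>t < a\<close> that] unfolding s_def by auto
    then have "f a + s * (t - a) \<le> f t"
      using \<open>t < a\<close> by (simp add: divide_le_eq algebra_simps)
    moreover have "f a + s * (t - a) = K - s"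
      using s by (simp add: t_def field_simps)
    ultimately show False using s bound[of t] by simp
  qed
  ultimately show ?thesis by (metis linorder_cases)
qed

lemma convex_on_Pair_slice:
  fixes g :: "'a::real_vector \<times> 'b::real_vector \<Rightarrow> real"
  assumes "convex_on UNIV g"
  shows "convex_on UNIV (\<lambda>t. g (a, t))"
proof (rule convex_onI)
  fix u :: real and x y :: 'b
  assume "0 < u" "u < 1"
  then show "g (a, (1 - u) *\<^sub>R x + u *\<^sub>R y) \<le> (1 - u) * g (a, x) + u * g (a, y)"
    using convex_onD[OF assms, of u "(a, x)" "(a, y)"] by (simp add: scaleR_collapse)
qed simp

lemma not_convex_on_quadratic_of_inverse_exp:
  fixes n b c :: real
  assumes n: "n > 0"
  shows "\<not> convex_on UNIV (\<lambda>t. n * (1 / (n + exp (- t)))\<^sup>2 - 2 * b * (1 / (n + exp (- t))) + c)"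
proof
  define u where "u t = 1 / (n + exp (- t))" for t
  define f where "f t = n * (u t)\<^sup>2 - 2 * b * u t + c" for t
  assume "convex_on UNIV (\<lambda>t. n * (1 / (n + exp (- t)))\<^sup>2 - 2 * b * (1 / (n + exp (- t))) + c)"
  then have cvx: "convex_on UNIV f" by (simp add: f_def[abs_def] u_def)
  have u_pos: "0 < u t" and nu_le: "n * u t \<le> 1" for t
    using n by (simp_all add: u_def add_pos_pos)
  have "f t \<le> 1 / n + 2 * \<bar>b\<bar> / n + c" for t
  proof -
    have "n * (u t)\<^sup>2 \<le> u t" using nu_le[of t] u_pos[of t] by (simp add: power2_eq_square)
    moreover have "u t \<le> 1 / n" using nu_le[of t] n by (simp add: field_simps)
    moreover have "- b * u t \<le> \<bar>b\<bar> / n"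
    proof -
      have "- b * u t \<le> \<bar>b\<bar> * u t" using u_pos[of t] by (intro mult_right_mono) auto
      also have "\<dots> \<le> \<bar>b\<bar> * (1 / n)" using \<open>u t \<le> 1 / n\<close> by (intro mult_left_mono) auto
      finally show ?thesis by simp
    qed
    ultimately show ?thesis by (simp add: f_def)
  qed
  then have const: "f s = f t" for s t by (rule convex_on_real_bounded_above_const[OF cvx])
  have u_inj: "s = t" if "u s = u t" for s t
    using that n by (simp add: u_def add_pos_pos)
  have sum_eq: "n * (u s + u t) = 2 * b" if "s \<noteq> t" for s t
  proof -
    have "(u s - u t) * (n * (u s + u t) - 2 * b) = f s - f t"
      by (simp add: f_def power2_eq_square algebra_simps)
    then show ?thesis using const[of s t] u_inj[of s t] that by auto
  qed
  have "n * (u 0 + u 1) = n * (u 0 + u 2)" using sum_eq[of 0 1] sum_eq[of 0 2] by simp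
  then have "u 1 = u 2" using n by simp
  then show False using u_inj by fastforce
qed

theorem lemma3:
  fixes M :: "'a measure" and N :: nat
    and X :: "nat \<Rightarrow> 'a \<Rightarrow> real^'d" and Y :: "nat \<Rightarrow> 'a \<Rightarrow> real"
  assumes "prob_space M" and "N \<ge> 1"
    and "\<And>i. i \<in> {1..N+1} \<Longrightarrow> X i \<in> borel_measurable M"
    and "prob_space.indep_vars M (\<lambda>_. borel) X {1..N+1}"
    and "\<And>i. i \<in> {1..N+1} \<Longrightarrow> distr M borel (X i) = sphere_unif"
    and "\<And>i. i \<in> {1..N} \<Longrightarrow> Y i \<in> borel_measurable M"
    and "\<And>i. i \<in> {1..N} \<Longrightarrow> integrable M (\<lambda>\<omega>. (Y i \<omega>)\<^sup>2)"
    and "\<And>i j. i \<in> {1..N} \<Longrightarrow> j \<in> {1..N} \<Longrightarrow> i \<noteq> j \<Longrightarrow>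
           AE \<omega> in M. real_cond_exp M (prompt_alg M N X) (\<lambda>\<omega>. Y i \<omega> * Y j \<omega>) \<omega> = 0"
    and "\<And>i. i \<in> {1..N} \<Longrightarrow>
           AE \<omega> in M. real_cond_exp M (prompt_alg M N X) (\<lambda>\<omega>. (Y i \<omega>)\<^sup>2) \<omega> = 1"
    and "distr M ((PiM {1..N} (\<lambda>_. borel)) \<Otimes>\<^sub>M (PiM {1..N} (\<lambda>_. borel)))
           (\<lambda>\<omega>. (\<lambda>i\<in>{1..N}. X i \<omega>, \<lambda>i\<in>{1..N}. Y i \<omega>))
         = distr M ((PiM {1..N} (\<lambda>_. borel)) \<Otimes>\<^sub>M (PiM {1..N} (\<lambda>_. borel)))
           (\<lambda>\<omega>. (\<lambda>i\<in>{1..N}. - X i \<omega>, \<lambda>i\<in>{1..N}. Y i \<omega>))"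
    and "distr M (((PiM {1..N} (\<lambda>_. borel)) \<Otimes>\<^sub>M (PiM {1..N} (\<lambda>_. borel))) \<Otimes>\<^sub>M borel)
           (\<lambda>\<omega>. ((\<lambda>i\<in>{1..N}. X i \<omega>, \<lambda>i\<in>{1..N}. Y i \<omega>), X (N+1) \<omega>))
         = distr M ((PiM {1..N} (\<lambda>_. borel)) \<Otimes>\<^sub>M (PiM {1..N} (\<lambda>_. borel))) (\<lambda>\<omega>. (\<lambda>i\<in>{1..N}. X i \<omega>, \<lambda>i\<in>{1..N}. Y i \<omega>)) \<Otimes>\<^sub>M distr M borel (X (N+1))"
  shows "(\<forall>\<xi>1 \<xi>2. icl_loss M N X Y (diagW \<xi>1 \<xi>2) = 1/2 * Lcal M N X Y \<xi>1 \<xi>2)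
         \<and> \<not> convex_on UNIV (\<lambda>p::real \<times> real. Lcal M N X Y (fst p) (snd p))"
proof -
  have X_prompt: "\<And>i. i \<in> {1..N} \<Longrightarrow> X i \<in> borel_measurable M" using assms(3) by simp
  have X_query: "X (N+1) \<in> borel_measurable M" using assms(3) by simp
  have query_distr: "distr M borel (X (N+1)) = sphere_unif" by (rule assms(5)) simp
  have "AE x in distr M borel (X (N+1)). norm x = 1"
    unfolding query_distr by (rule AE_sphere_unif_norm)
  then have "AE \<omega> in M. norm (X (N+1) \<omega>) = 1" by (subst (asm) AE_distr_iff) (use X_query in auto)
  then have loss: "\<forall>\<xi>1 \<xi>2. icl_loss M N X Y (diagW \<xi>1 \<xi>2) = 1/2 * Lcal M N X Y \<xi>1 \<xi>2"
    using icl_loss_diagW[where X = X and Y = Y, OF assms(2,3,6)] by blast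
  obtain B C where Lcal_zero: "(\<lambda>t. Lcal M N X Y 0 t)
      = (\<lambda>t. real N * (1 / (real N + exp (- t)))\<^sup>2 - 2 * B * (1 / (real N + exp (- t))) + C)"
    using Lcal_zero_quadratic[where X = X and Y = Y, OF assms(2,3,6,7)
        integral_label_products[where X = X and Y = Y, OF assms(1) X_prompt assms(6-9)]]
    by blast
  have "\<not> convex_on UNIV (\<lambda>p::real \<times> real. Lcal M N X Y (fst p) (snd p))"
  proof
    assume "convex_on UNIV (\<lambda>p::real \<times> real. Lcal M N X Y (fst p) (snd p))"
    then have "convex_on UNIV (\<lambda>t. Lcal M N X Y 0 t)"
      using convex_on_Pair_slice[of _ 0] by fastforce
    then show False
      using not_convex_on_quadratic_of_inverse_exp[of "real N" B C] assms(2) by (simp add: Lcal_zero)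
  qed
  with loss show ?thesis by blast
qed

end
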